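(* Let $\tau$ be real, and let $a,b,s$ be integers with $a\leq 0$, $b\leq 0$ and $s>1$. If $s$ and $b$ have the same parity, then $$\psi^{a,b}_s(\tau)=\sum_{n=1}^{\infty}\frac{\sec^a(\pi n\tau)\csc^b(\pi n\tau)}{n^s}=\pi^s f(\tau),$$ where $f$ is a piecewise polynomial function of $\tau$ with rational coefficients on each piece. *)

theory Defs
  imports Complex_Main "HOL-Computational_Algebra.Polynomial"
begin

definition sec :: "real \<Rightarrow> real" where "sec x = 1 / cos x"
definition csc :: "real \<Rightarrow> real" where "csc x = 1 / sin x"

definition psi :: "int \<Rightarrow> int \<Rightarrow> int \<Rightarrow> real \<Rightarrow> real" where
  "psi a b s \<tau> = (\<Sum>m. let n = real (Suc m) in
      (sec (pi * n * \<tau>)) powi a * (csc (pi * n * \<tau>)) powi b / (n powi s))"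

definition piecewise_rat_poly :: "(real \<Rightarrow> real) \<Rightarrow> bool" where
  "piecewise_rat_poly f \<longleftrightarrow>
     (\<forall>u v. u \<le> v \<longrightarrow>
        (\<exists>xs :: real list. xs \<noteq> [] \<and> sorted xs \<and> hd xs = u \<and> last xs = v \<and>
           (\<forall>i < length xs - 1. \<exists>p :: real poly. (\<forall>j. coeff p j \<in> \<rat>) \<and>
              (\<forall>x \<in> {xs ! i .. xs ! Suc i}. f x = poly p x))))"

end

theory Submission
  imports Defs "HOL-Analysis.Analysis"
begin

text \<open>With \<open>m = -a\<close> and \<open>n = -b\<close> the summand is \<open>cos\<^sup>m x sin\<^sup>n x / k\<^sup>s\<close> at \<open>x = \<pi> k \<tau>\<close>, and
  \<open>cos\<^sup>m x sin\<^sup>n x\<close> is a rational combination of \<open>cos (j x)\<close> (\<open>n\<close> even) or \<open>sin (j x)\<close>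
  (\<open>n\<close> odd). As \<open>s \<equiv> n\<close> mod 2, \<open>\<psi>\<close> is a rational combination of the series
  \<open>\<Sum> cos (k\<theta>) / k\<^sup>s\<close> (\<open>s\<close> even) or \<open>\<Sum> sin (k\<theta>) / k\<^sup>s\<close> (\<open>s\<close> odd) at \<open>\<theta> = j\<pi>\<tau>\<close>.
  On \<open>[0, 2\<pi>]\<close> such a series is \<open>\<pi>\<^sup>s p(\<theta>/\<pi>)\<close> with \<open>p\<close> a rational polynomial (a Bernoulli
  polynomial up to a factor): for \<open>s = 2\<close> by Abel summation, and then inductively by
  integrating termwise, where the constant of integration of the cosine series \<open>C\<close> is fixed by
  \<open>C(\<pi>) + C(0) = 2 C(0) / 2\<^sup>s\<close>. By \<open>2\<pi>\<close>-periodicity every term, and hence \<open>\<psi> / \<pi>\<^sup>s\<close>, is a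
  rational polynomial on each cell of a grid of mesh \<open>1/N\<close>.\<close>

definition rational_poly :: "real poly \<Rightarrow> bool" where
  "rational_poly p \<longleftrightarrow> (\<forall>i. coeff p i \<in> \<rat>)"

lemma rational_poly_0 [intro]: "rational_poly 0"
  by (simp add: rational_poly_def)

lemma rational_poly_pCons [intro]: "c \<in> \<rat> \<Longrightarrow> rational_poly p \<Longrightarrow> rational_poly (pCons c p)"
  by (simp add: rational_poly_def coeff_pCons split: nat.split)

lemma rational_poly_add [intro]: "rational_poly p \<Longrightarrow> rational_poly q \<Longrightarrow> rational_poly (p + q)"
  by (simp add: rational_poly_def)

lemma rational_poly_diff [intro]: "rational_poly p \<Longrightarrow> rational_poly q \<Longrightarrow> rational_poly (p - q)"
  by (simp add: rational_poly_def)

lemma rational_poly_smult [intro]: "c \<in> \<rat> \<Longrightarrow> rational_poly p \<Longrightarrow> rational_poly (smult c p)"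
  by (simp add: rational_poly_def)

lemma rational_poly_pcompose [intro]:
  "rational_poly p \<Longrightarrow> rational_poly q \<Longrightarrow> rational_poly (pcompose p q)"
  unfolding rational_poly_def by (intro allI coeff_pcompose_semiring_closed[of \<rat>]) auto

lemma rational_poly_poly_in_Rats: "rational_poly p \<Longrightarrow> x \<in> \<rat> \<Longrightarrow> poly p x \<in> \<rat>"
  unfolding poly_altdef rational_poly_def by (auto intro!: Rats_sum)

definition poly_antideriv :: "real poly \<Rightarrow> real poly" where
  "poly_antideriv p = (\<Sum>i\<le>degree p. monom (coeff p i / real (Suc i)) (Suc i))"

lemma coeff_poly_antideriv:
  "coeff (poly_antideriv p) k = (if k = 0 then 0 else coeff p (k - 1) / real k)"
proof (cases k)
  case (Suc i)
  have "coeff (poly_antideriv p) k = (\<Sum>j\<le>degree p. if j = i then coeff p j / real (Suc j) else 0)"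
    unfolding poly_antideriv_def coeff_sum Suc by (intro sum.cong) auto
  also have "\<dots> = coeff p i / real (Suc i)"
    using coeff_eq_0[of p i] by (auto simp: sum.delta')
  finally show ?thesis using Suc by simp
qed (simp add: poly_antideriv_def coeff_sum)

lemma pderiv_poly_antideriv [simp]: "pderiv (poly_antideriv p) = p"
  by (rule poly_eqI) (simp add: coeff_pderiv coeff_poly_antideriv del: of_nat_Suc)

lemma poly_antideriv_at_0 [simp]: "poly (poly_antideriv p) 0 = 0"
  by (simp add: poly_antideriv_def poly_sum poly_monom)

lemma rational_poly_antideriv [intro]: "rational_poly p \<Longrightarrow> rational_poly (poly_antideriv p)"
  by (simp add: rational_poly_def coeff_poly_antideriv)

lemma has_field_derivative_poly_antideriv_rescaled:
  fixes c :: real assumes "c \<noteq> 0"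
  shows "((\<lambda>x. c ^ Suc n * poly (poly_antideriv p) (x / c)) has_field_derivative
           c ^ n * poly p (x / c)) (at x)"
proof -
  have "((\<lambda>x. x / c) has_field_derivative 1 / c) (at x)"
    using assms by (auto intro!: derivative_eq_intros)
  from DERIV_chain2[OF poly_DERIV[of "poly_antideriv p"] this]
  have "((\<lambda>x. poly (poly_antideriv p) (x / c)) has_field_derivative poly p (x / c) * (1 / c)) (at x)"
    by simp
  from DERIV_cmult[OF this, of "c ^ Suc n"] show ?thesis
    using assms by simp
qed

section \<open>Functions that are rational polynomials on the cells of a grid\<close>

definition rational_poly_on_cells :: "(real \<Rightarrow> real) \<Rightarrow> real \<Rightarrow> bool" where
  "rational_poly_on_cells f \<delta> \<longleftrightarrow>
     (\<forall>j::int. \<exists>p. rational_poly p \<and> (\<forall>x\<in>{of_int j * \<delta> .. (of_int j + 1) * \<delta>}. f x = poly p x))"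

lemma rational_poly_on_cells_const:
  "c \<in> \<rat> \<Longrightarrow> rational_poly_on_cells (\<lambda>_. c) \<delta>"
  unfolding rational_poly_on_cells_def by (auto intro!: exI[of _ "[:c:]"])

lemma rational_poly_on_cells_add:
  assumes "rational_poly_on_cells f \<delta>" "rational_poly_on_cells g \<delta>"
  shows "rational_poly_on_cells (\<lambda>x. f x + g x) \<delta>"
  unfolding rational_poly_on_cells_def
proof
  fix j :: int
  obtain p q where "rational_poly p" "\<forall>x\<in>{of_int j * \<delta> .. (of_int j + 1) * \<delta>}. f x = poly p x"
    and "rational_poly q" "\<forall>x\<in>{of_int j * \<delta> .. (of_int j + 1) * \<delta>}. g x = poly q x"
    using assms unfolding rational_poly_on_cells_def by meson
  then show "\<exists>r. rational_poly r \<and> (\<forall>x\<in>{of_int j * \<delta> .. (of_int j + 1) * \<delta>}. f x + g x = poly r x)"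
    by (intro exI[of _ "p + q"]) auto
qed

lemma rational_poly_on_cells_cmult:
  assumes "c \<in> \<rat>" "rational_poly_on_cells f \<delta>"
  shows "rational_poly_on_cells (\<lambda>x. c * f x) \<delta>"
  using assms unfolding rational_poly_on_cells_def
  by (metis poly_smult rational_poly_smult)

lemma rational_poly_on_cells_refine:
  assumes f: "rational_poly_on_cells f \<delta>" and "\<delta> \<ge> 0" "N > 0"
  shows "rational_poly_on_cells f (\<delta> / real N)"
  unfolding rational_poly_on_cells_def
proof
  fix j :: int
  \<comment> \<open>the \<open>j\<close>-th fine cell lies in the \<open>(j div N)\<close>-th coarse cell\<close>
  define m where "m = j div int N"
  have "m * int N \<le> j" "j < (m + 1) * int N"
    using \<open>N > 0\<close> div_mult_mod_eq[of j "int N"] pos_mod_bound[of "int N" j]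
      pos_mod_sign[of "int N" j]
    unfolding m_def distrib_right by linarith+
  then have "real_of_int (m * int N) \<le> of_int j" "real_of_int (j + 1) \<le> of_int ((m + 1) * int N)"
    by linarith+
  then have "of_int m * real N \<le> of_int j" "of_int j + 1 \<le> (of_int m + 1) * real N"
    by simp_all
  then have "of_int m * real N * (\<delta> / real N) \<le> of_int j * (\<delta> / real N)"
    "(of_int j + 1) * (\<delta> / real N) \<le> (of_int m + 1) * real N * (\<delta> / real N)"
    using assms by (metis mult_right_mono divide_nonneg_nonneg of_nat_0_le_iff)+
  then have "of_int m * \<delta> \<le> of_int j * (\<delta> / real N)"
    "(of_int j + 1) * (\<delta> / real N) \<le> (of_int m + 1) * \<delta>"
    using \<open>N > 0\<close> by simp_all
  moreover obtain p where "rational_poly p" "\<forall>x\<in>{of_int m * \<delta> .. (of_int m + 1) * \<delta>}. f x = poly p x"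
    using f unfolding rational_poly_on_cells_def by blast
  ultimately show "\<exists>p. rational_poly p \<and>
      (\<forall>x\<in>{of_int j * (\<delta> / real N) .. (of_int j + 1) * (\<delta> / real N)}. f x = poly p x)"
    by (intro exI[of _ p]) auto
qed

lemma rational_poly_on_cells_scale:
  assumes f: "rational_poly_on_cells f \<delta>" and "N > 0"
  shows "rational_poly_on_cells (\<lambda>x. f (real N * x)) (\<delta> / real N)"
  unfolding rational_poly_on_cells_def
proof
  fix j :: int
  obtain p where p: "rational_poly p" "\<forall>y\<in>{of_int j * \<delta> .. (of_int j + 1) * \<delta>}. f y = poly p y"
    using f unfolding rational_poly_on_cells_def by blast
  have "real N * x \<in> {of_int j * \<delta> .. (of_int j + 1) * \<delta>}"
    if "x \<in> {of_int j * (\<delta> / real N) .. (of_int j + 1) * (\<delta> / real N)}" for x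
    using that \<open>N > 0\<close> by (auto simp: field_simps)
  with p show "\<exists>q. rational_poly q \<and>
      (\<forall>x\<in>{of_int j * (\<delta> / real N) .. (of_int j + 1) * (\<delta> / real N)}. f (real N * x) = poly q x)"
    by (intro exI[of _ "pcompose p [:0, real N:]"])
      (auto simp: poly_pcompose mult.commute intro!: rational_poly_pcompose rational_poly_pCons)
qed

lemma rational_poly_on_cells_reflect:
  assumes f: "rational_poly_on_cells f \<delta>"
  shows "rational_poly_on_cells (\<lambda>x. f (- x)) \<delta>"
  unfolding rational_poly_on_cells_def
proof
  fix j :: int
  obtain p where p: "rational_poly p"
    "\<forall>y\<in>{of_int (- j - 1) * \<delta> .. (of_int (- j - 1) + 1) * \<delta>}. f y = poly p y"
    using f unfolding rational_poly_on_cells_def by blast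
  have "- x \<in> {of_int (- j - 1) * \<delta> .. (of_int (- j - 1) + 1) * \<delta>}"
    if "x \<in> {of_int j * \<delta> .. (of_int j + 1) * \<delta>}" for x
    using that by (auto simp: algebra_simps)
  with p show "\<exists>q. rational_poly q \<and>
      (\<forall>x\<in>{of_int j * \<delta> .. (of_int j + 1) * \<delta>}. f (- x) = poly q x)"
    by (intro exI[of _ "pcompose p [:0, -1:]"])
      (auto simp: poly_pcompose intro!: rational_poly_pcompose rational_poly_pCons)
qed

lemma rational_poly_on_cells_int_mult:
  assumes f: "rational_poly_on_cells f \<delta>" and "k \<noteq> 0"
  shows "rational_poly_on_cells (\<lambda>x. f (of_int k * x)) (\<delta> / real (nat \<bar>k\<bar>))"
proof (cases "k > 0")
  case True
  then show ?thesis
    using rational_poly_on_cells_scale[OF f, of "nat k"] by simp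
next
  case False
  then have "of_int k * x = - (real (nat \<bar>k\<bar>) * x)" for x
    by simp
  then show ?thesis
    using rational_poly_on_cells_scale[OF rational_poly_on_cells_reflect[OF f], of "nat \<bar>k\<bar>"] \<open>k \<noteq> 0\<close>
    by simp
qed

definition piecewise_rat_poly_on :: "(real \<Rightarrow> real) \<Rightarrow> real \<Rightarrow> real \<Rightarrow> bool" where
  "piecewise_rat_poly_on f u v \<longleftrightarrow>
     (\<exists>xs. xs \<noteq> [] \<and> sorted xs \<and> hd xs = u \<and> last xs = v \<and>
        (\<forall>i < length xs - 1. \<exists>p. rational_poly p \<and> (\<forall>x \<in> {xs ! i .. xs ! Suc i}. f x = poly p x)))"

lemma piecewise_rat_poly_iff:
  "piecewise_rat_poly f \<longleftrightarrow> (\<forall>u v. u \<le> v \<longrightarrow> piecewise_rat_poly_on f u v)"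
  by (simp add: piecewise_rat_poly_def piecewise_rat_poly_on_def rational_poly_def)

lemma piecewise_rat_poly_on_single:
  assumes "u \<le> v" "rational_poly p" "\<forall>x\<in>{u..v}. f x = poly p x"
  shows "piecewise_rat_poly_on f u v"
  unfolding piecewise_rat_poly_on_def
  by (rule exI[of _ "[u, v]"]) (use assms less_Suc0 in auto)

lemma piecewise_rat_poly_on_Cons:
  assumes "u \<le> w" "rational_poly p" "\<forall>x\<in>{u..w}. f x = poly p x"
    and "piecewise_rat_poly_on f w v"
  shows "piecewise_rat_poly_on f u v"
proof -
  obtain ys where ys: "sorted (w # ys)" "last (w # ys) = v"
    "\<forall>i < length ys. \<exists>p. rational_poly p \<and> (\<forall>x \<in> {(w # ys) ! i .. (w # ys) ! Suc i}. f x = poly p x)"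
    using assms(4) unfolding piecewise_rat_poly_on_def by (metis length_tl list.collapse list.sel(1,3))
  have "\<exists>p. rational_poly p \<and> (\<forall>x \<in> {(u # w # ys) ! i .. (u # w # ys) ! Suc i}. f x = poly p x)"
    if "i < length (w # ys)" for i
    using ys(3) assms(2,3) that by (cases i) auto
  then show ?thesis
    unfolding piecewise_rat_poly_on_def
    by (intro exI[of _ "u # w # ys"]) (use ys assms(1) in auto)
qed

lemma floor_cell:
  fixes \<delta> x :: real assumes "\<delta> > 0"
  shows "of_int \<lfloor>x / \<delta>\<rfloor> * \<delta> \<le> x" "x < (of_int \<lfloor>x / \<delta>\<rfloor> + 1) * \<delta>"
  using assms by (simp_all add: pos_le_divide_eq[symmetric] pos_divide_less_eq[symmetric])

lemma piecewise_rat_poly_on_within_cell: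
  assumes "rational_poly_on_cells f \<delta>"
    and "of_int j * \<delta> \<le> u" "u \<le> v" "v \<le> (of_int j + 1) * \<delta>"
  shows "piecewise_rat_poly_on f u v"
proof -
  obtain p where "rational_poly p" "\<forall>x\<in>{of_int j * \<delta> .. (of_int j + 1) * \<delta>}. f x = poly p x"
    using assms(1) unfolding rational_poly_on_cells_def by blast
  with assms(2-4) show ?thesis
    by (intro piecewise_rat_poly_on_single[of u v p]) auto
qed

lemma piecewise_rat_poly_on_if_cells:
  assumes f: "rational_poly_on_cells f \<delta>" and "\<delta> > 0"
    and "u \<le> v" "v \<le> (of_int \<lfloor>u / \<delta>\<rfloor> + 1 + real n) * \<delta>"
  shows "piecewise_rat_poly_on f u v"
  using assms(3,4)
proof (induction n arbitrary: u)
  case 0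
  then show ?case
    using floor_cell[OF \<open>\<delta> > 0\<close>, of u] by (intro piecewise_rat_poly_on_within_cell[OF f]) auto
next
  case (Suc n)
  define w where "w = (of_int \<lfloor>u / \<delta>\<rfloor> + 1) * \<delta>"
  show ?case
  proof (cases "v \<le> w")
    case True
    then show ?thesis
      using Suc.prems floor_cell[OF \<open>\<delta> > 0\<close>, of u]
      by (intro piecewise_rat_poly_on_within_cell[OF f]) (auto simp: w_def)
  next
    case False
    have "w / \<delta> = of_int (\<lfloor>u / \<delta>\<rfloor> + 1)"
      using \<open>\<delta> > 0\<close> by (simp add: w_def)
    then have "\<lfloor>w / \<delta>\<rfloor> = \<lfloor>u / \<delta>\<rfloor> + 1"
      by simp
    then have "piecewise_rat_poly_on f w v"
      using Suc False by (intro Suc.IH) (auto simp: w_def algebra_simps)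
    moreover obtain p where "rational_poly p" "\<forall>x\<in>{of_int \<lfloor>u / \<delta>\<rfloor> * \<delta> .. w}. f x = poly p x"
      using f unfolding rational_poly_on_cells_def w_def by blast
    ultimately show ?thesis
      using floor_cell[OF \<open>\<delta> > 0\<close>, of u]
      by (intro piecewise_rat_poly_on_Cons[of u w p]) (auto simp: w_def)
  qed
qed

lemma rational_poly_on_cells_imp_piecewise:
  assumes f: "rational_poly_on_cells f \<delta>" and "\<delta> > 0"
  shows "piecewise_rat_poly f"
  unfolding piecewise_rat_poly_iff
proof (intro allI impI)
  fix u v :: real assume "u \<le> v"
  define n where "n = nat (\<lceil>v / \<delta>\<rceil> - \<lfloor>u / \<delta>\<rfloor>)"
  have "v / \<delta> \<le> of_int \<lfloor>u / \<delta>\<rfloor> + 1 + real n"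
    unfolding n_def by linarith
  then have "v \<le> (of_int \<lfloor>u / \<delta>\<rfloor> + 1 + real n) * \<delta>"
    using \<open>\<delta> > 0\<close> by (simp add: pos_divide_le_eq)
  with f \<open>\<delta> > 0\<close> \<open>u \<le> v\<close> show "piecewise_rat_poly_on f u v"
    by (rule piecewise_rat_poly_on_if_cells)
qed

definition rational_poly_on_grid :: "(real \<Rightarrow> real) \<Rightarrow> bool" where
  "rational_poly_on_grid f \<longleftrightarrow> (\<exists>N > 0. rational_poly_on_cells f (1 / real N))"

lemma rational_poly_on_grid_if_cells:
  assumes "rational_poly_on_cells f (real M / real N)" "M > 0" "N > 0"
  shows "rational_poly_on_grid f"
  unfolding rational_poly_on_grid_def
  using rational_poly_on_cells_refine[OF assms(1) _ \<open>M > 0\<close>] \<open>M > 0\<close> \<open>N > 0\<close>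
  by (intro exI[of _ N]) simp

lemma rational_poly_on_grid_const: "c \<in> \<rat> \<Longrightarrow> rational_poly_on_grid (\<lambda>_. c)"
  unfolding rational_poly_on_grid_def by (auto intro: rational_poly_on_cells_const)

lemma rational_poly_on_grid_cmult:
  "c \<in> \<rat> \<Longrightarrow> rational_poly_on_grid f \<Longrightarrow> rational_poly_on_grid (\<lambda>x. c * f x)"
  unfolding rational_poly_on_grid_def by (auto intro: rational_poly_on_cells_cmult)

lemma rational_poly_on_grid_add:
  assumes "rational_poly_on_grid f" "rational_poly_on_grid g"
  shows "rational_poly_on_grid (\<lambda>x. f x + g x)"
proof -
  obtain M N where "M > 0" "N > 0"
    and f: "rational_poly_on_cells f (1 / real M)" and g: "rational_poly_on_cells g (1 / real N)"
    using assms unfolding rational_poly_on_grid_def by blast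
  have "rational_poly_on_cells f (1 / real M / real N)" "rational_poly_on_cells g (1 / real N / real M)"
    using rational_poly_on_cells_refine[OF f _ \<open>N > 0\<close>] rational_poly_on_cells_refine[OF g _ \<open>M > 0\<close>]
    by simp_all
  then have "rational_poly_on_cells (\<lambda>x. f x + g x) (1 / real (M * N))"
    by (intro rational_poly_on_cells_add) (simp_all add: mult.commute)
  with \<open>M > 0\<close> \<open>N > 0\<close> show ?thesis
    unfolding rational_poly_on_grid_def by (intro exI[of _ "M * N"]) simp
qed

lemma rational_poly_on_grid_sum_list:
  "(\<And>x. x \<in> set xs \<Longrightarrow> rational_poly_on_grid (f x)) \<Longrightarrow>
     rational_poly_on_grid (\<lambda>t. \<Sum>x\<leftarrow>xs. f x t)"
  by (induction xs) (auto intro: rational_poly_on_grid_add rational_poly_on_grid_const)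

lemma rational_poly_on_grid_imp_piecewise: "rational_poly_on_grid f \<Longrightarrow> piecewise_rat_poly f"
  unfolding rational_poly_on_grid_def by (auto intro: rational_poly_on_cells_imp_piecewise)

lemma has_field_derivative_suminf:
  fixes f f' :: "nat \<Rightarrow> real \<Rightarrow> real"
  assumes "\<And>n x. (f n has_field_derivative f' n x) (at x)"
    and "\<And>n x. \<bar>f' n x\<bar> \<le> M n" and "summable M" and "summable (\<lambda>n. f n 0)"
  shows "((\<lambda>x. \<Sum>n. f n x) has_field_derivative (\<Sum>n. f' n x)) (at x)"
  by (rule has_field_derivative_series'(2)[of UNIV f f' 0])
    (use assms in \<open>auto intro!: Weierstrass_m_test'\<close>)

lemma summable_inverse_Suc_power:
  assumes "2 \<le> s" shows "summable (\<lambda>n. 1 / real (Suc n) ^ s)"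
proof -
  have "summable (\<lambda>n. inverse (real n ^ s))"
    using assms by (rule inverse_power_summable)
  from summable_ignore_initial_segment[OF this, of 1] show ?thesis
    by (simp add: divide_inverse)
qed

definition cos_or_sin :: "bool \<Rightarrow> real \<Rightarrow> real" where
  "cos_or_sin c y = (if c then cos y else sin y)"

definition trig_series :: "bool \<Rightarrow> nat \<Rightarrow> real \<Rightarrow> real" where
  "trig_series c s t = (\<Sum>n. cos_or_sin c (real (Suc n) * t) / real (Suc n) ^ s)"

lemma abs_cos_or_sin_le_one: "\<bar>cos_or_sin c y\<bar> \<le> 1"
  by (simp add: cos_or_sin_def abs_cos_le_one abs_sin_le_one)

lemma has_field_derivative_cos_or_sin:
  "(cos_or_sin c has_field_derivative (if c then - 1 else 1) * cos_or_sin (\<not> c) y) (at y)"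
  unfolding cos_or_sin_def[abs_def] by (cases c) (auto intro!: derivative_eq_intros)

lemma abs_trig_term_le: "\<bar>cos_or_sin c y / real (Suc n) ^ s\<bar> \<le> 1 / real (Suc n) ^ s"
  using abs_cos_or_sin_le_one[of c y] by (simp add: abs_divide divide_right_mono del: of_nat_Suc)

lemma summable_trig_series:
  "2 \<le> s \<Longrightarrow> summable (\<lambda>n. cos_or_sin c (real (Suc n) * t) / real (Suc n) ^ s)"
  by (rule summable_comparison_test[OF _ summable_inverse_Suc_power]) (use abs_trig_term_le in auto)

lemma has_field_derivative_trig_series:
  assumes "2 \<le> s"
  shows "(trig_series c (Suc s) has_field_derivative
            (if c then - 1 else 1) * trig_series (\<not> c) s t) (at t)"
proof -
  let ?sgn = "if c then - 1 else 1 :: real"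
  have "(trig_series c (Suc s) has_field_derivative
          (\<Sum>n. ?sgn * (cos_or_sin (\<not> c) (real (Suc n) * t) / real (Suc n) ^ s))) (at t)"
    unfolding trig_series_def[abs_def]
  proof (rule has_field_derivative_suminf)
    show "((\<lambda>t. cos_or_sin c (real (Suc n) * t) / real (Suc n) ^ Suc s) has_field_derivative
           ?sgn * (cos_or_sin (\<not> c) (real (Suc n) * t) / real (Suc n) ^ s)) (at t)" for n t
      by (rule DERIV_cong[OF DERIV_divide[OF DERIV_chain2[OF has_field_derivative_cos_or_sin]]])
        (auto intro!: derivative_eq_intros simp del: of_nat_Suc)
    show "\<bar>?sgn * (cos_or_sin (\<not> c) (real (Suc n) * t) / real (Suc n) ^ s)\<bar> \<le> 1 / real (Suc n) ^ s"
      for n t using abs_trig_term_le[of True] abs_trig_term_le[of False] by (simp add: abs_mult)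
    show "summable (\<lambda>n. cos_or_sin c (real (Suc n) * 0) / real (Suc n) ^ Suc s)"
      using assms by (intro summable_trig_series) simp
  qed (use assms summable_inverse_Suc_power in auto)
  moreover have "(\<Sum>n. ?sgn * (cos_or_sin (\<not> c) (real (Suc n) * t) / real (Suc n) ^ s))
      = ?sgn * trig_series (\<not> c) s t"
    unfolding trig_series_def by (rule suminf_mult[OF summable_trig_series[OF assms]])
  ultimately show ?thesis
    by (simp only:)
qed

lemma trig_series_periodic: "trig_series c s (t + 2 * pi * of_int m) = trig_series c s t"
proof -
  have "real (Suc n) * (t + 2 * pi * of_int m) = real (Suc n) * t + 2 * pi * of_int (int (Suc n) * m)" for n
    by (simp add: algebra_simps)
  then have "cos_or_sin c (real (Suc n) * (t + 2 * pi * of_int m)) = cos_or_sin c (real (Suc n) * t)" for n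
    unfolding cos_or_sin_def
    by (simp only: cos_add sin_add cos_int_2pin sin_int_2pin mult_1_right mult_zero_right add_0_right diff_zero)
  then show ?thesis
    unfolding trig_series_def by simp
qed

lemma sin_series_at_0: "trig_series False s 0 = 0"
  by (simp add: trig_series_def cos_or_sin_def)

text \<open>Since \<open>cos (n\<pi>) = (-1)^n\<close>, the odd terms of the two series cancel and the even terms double.\<close>
lemma cos_series_at_pi:
  assumes "2 \<le> s"
  shows "trig_series True s pi + trig_series True s 0 = 2 * trig_series True s 0 / 2 ^ s"
proof -
  define a where "a n = cos_or_sin True (real (Suc n) * 0) / real (Suc n) ^ s" for n
  define b where "b n = cos_or_sin True (real (Suc n) * pi) / real (Suc n) ^ s" for n
  have sa: "a sums trig_series True s 0" and sb: "b sums trig_series True s pi"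
    unfolding a_def b_def trig_series_def by (intro summable_sums summable_trig_series assms)+
  have "(\<lambda>m. \<Sum>n\<in>{m*2..<m*2+2}. a n + b n) sums (trig_series True s 0 + trig_series True s pi)"
    by (rule sums_group[OF sums_add[OF sa sb]]) simp
  moreover have "(\<Sum>n\<in>{m*2..<m*2+2}. a n + b n) = 2 / 2 ^ s * a m" for m
  proof -
    have "{m*2..<m*2+2} = {2*m, Suc (2*m)}"
      by auto
    moreover have "real (2 * Suc m) ^ s = 2 ^ s * real (Suc m) ^ s"
      by (simp only: of_nat_mult of_nat_numeral power_mult_distrib)
    ultimately show ?thesis
      by (simp add: a_def b_def cos_or_sin_def mult.commute del: of_nat_Suc)
  qed
  ultimately have "(\<lambda>m. 2 / 2 ^ s * a m) sums (trig_series True s 0 + trig_series True s pi)"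
    by simp
  with sums_mult[OF sa, of "2 / 2 ^ s"] show ?thesis
    by (simp add: sums_iff)
qed

section \<open>The cosine series of order two\<close>

lemma sums_geometric_cos:
  fixes r t :: real assumes "0 \<le> r" "r < 1"
  shows "(\<lambda>n. r ^ Suc n * cos (real (Suc n) * t)) sums
           ((r * cos t - r\<^sup>2) / (1 - 2 * r * cos t + r\<^sup>2))"
proof -
  define z where "z = complex_of_real r * cis t"
  have z_power: "z ^ m = complex_of_real (r ^ m) * cis (real m * t)" for m
    by (simp add: z_def power_mult_distrib Complex.DeMoivre)
  have "norm z < 1"
    using assms by (simp add: z_def norm_mult)
  from sums_mult[OF geometric_sums[OF this], of z]
  have "(\<lambda>n. Re (z ^ Suc n)) sums Re (z / (1 - z))"
    by (intro sums_Re) simp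
  moreover have "Re (z ^ Suc n) = r ^ Suc n * cos (real (Suc n) * t)" for n
    unfolding z_power by simp
  moreover have "Re (z / (1 - z)) = (r * cos t - r\<^sup>2) / (1 - 2 * r * cos t + r\<^sup>2)"
  proof -
    have "Re (z / (1 - z)) = (r * cos t * (1 - r * cos t) - r * sin t * (r * sin t)) /
                              ((1 - r * cos t)\<^sup>2 + (r * sin t)\<^sup>2)"
      by (simp add: z_def Re_divide)
    also have "r * cos t * (1 - r * cos t) - r * sin t * (r * sin t) = r * cos t - r\<^sup>2 * (sin t ^ 2 + cos t ^ 2)"
      by (simp only: algebra_simps power2_eq_square)
    also have "(1 - r * cos t)\<^sup>2 + (r * sin t)\<^sup>2 = 1 - 2 * r * cos t + r\<^sup>2 * (sin t ^ 2 + cos t ^ 2)"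
      by (simp only: algebra_simps power2_eq_square)
    finally show ?thesis
      by simp
  qed
  ultimately show ?thesis
    by simp
qed

lemma summable_power_Suc: "0 \<le> r \<Longrightarrow> r < 1 \<Longrightarrow> summable (\<lambda>n. r ^ Suc n :: real)"
  using summable_mult[OF summable_geometric, of r r] by simp

definition abel_sin :: "real \<Rightarrow> real \<Rightarrow> real" where
  "abel_sin r t = (\<Sum>n. r ^ Suc n * sin (real (Suc n) * t) / real (Suc n))"

definition abel_cos :: "real \<Rightarrow> real \<Rightarrow> real" where
  "abel_cos r t = (\<Sum>n. r ^ Suc n * cos (real (Suc n) * t) / real (Suc n) ^ 2)"

lemma abel_cos_1: "abel_cos 1 t = trig_series True 2 t"
  by (simp add: abel_cos_def trig_series_def cos_or_sin_def)

lemma abs_abel_sin_term_le: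
  fixes r :: real assumes "0 \<le> r"
  shows "\<bar>r ^ Suc n * sin (real (Suc n) * t) / real (Suc n)\<bar> \<le> r ^ Suc n"
proof -
  have "\<bar>r ^ Suc n * sin (real (Suc n) * t) / real (Suc n)\<bar> = r ^ Suc n * \<bar>sin (real (Suc n) * t)\<bar> / real (Suc n)"
    using assms by (simp add: abs_mult)
  also have "\<dots> \<le> r ^ Suc n * 1 / 1"
    using assms by (intro frac_le mult_left_mono) auto
  finally show ?thesis
    by simp
qed

lemma has_field_derivative_abel_sin:
  fixes r :: real assumes "0 \<le> r" "r < 1"
  shows "(abel_sin r has_field_derivative (r * cos t - r\<^sup>2) / (1 - 2 * r * cos t + r\<^sup>2)) (at t)"
proof -
  have "(abel_sin r has_field_derivative (\<Sum>n. r ^ Suc n * cos (real (Suc n) * t))) (at t)"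
    unfolding abel_sin_def[abs_def]
  proof (rule has_field_derivative_suminf)
    show "((\<lambda>t. r ^ Suc n * sin (real (Suc n) * t) / real (Suc n)) has_field_derivative
            r ^ Suc n * cos (real (Suc n) * t)) (at t)" for n t
      by (auto intro!: derivative_eq_intros simp del: of_nat_Suc)
    show "\<bar>r ^ Suc n * cos (real (Suc n) * t)\<bar> \<le> r ^ Suc n" for n t
      using assms by (simp add: abs_mult mult_left_le abs_cos_le_one)
  qed (use summable_power_Suc[OF assms] in auto)
  then show ?thesis
    using sums_unique[OF sums_geometric_cos[OF assms]] by simp
qed

lemma has_field_derivative_abel_cos:
  fixes r :: real assumes "0 \<le> r" "r < 1"
  shows "(abel_cos r has_field_derivative - abel_sin r t) (at t)"
proof -
  have "(abel_cos r has_field_derivative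
          (\<Sum>n. - (r ^ Suc n * sin (real (Suc n) * t) / real (Suc n)))) (at t)"
    unfolding abel_cos_def[abs_def]
  proof (rule has_field_derivative_suminf)
    show "((\<lambda>t. r ^ Suc n * cos (real (Suc n) * t) / real (Suc n) ^ 2) has_field_derivative
            - (r ^ Suc n * sin (real (Suc n) * t) / real (Suc n))) (at t)" for n t
      by (auto intro!: derivative_eq_intros simp: power2_eq_square field_simps simp del: of_nat_Suc)
    show "\<bar>- (r ^ Suc n * sin (real (Suc n) * t) / real (Suc n))\<bar> \<le> r ^ Suc n" for n t
      using abs_abel_sin_term_le[OF assms(1)] by simp
    have "r ^ Suc n / real (Suc n) ^ 2 \<le> r ^ Suc n / 1" for n
      using assms by (intro divide_left_mono) auto
    then show "summable (\<lambda>n. r ^ Suc n * cos (real (Suc n) * 0) / real (Suc n) ^ 2)"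
      using assms by (intro summable_comparison_test[OF _ summable_power_Suc[OF assms]]) auto
  qed (use summable_power_Suc[OF assms] in auto)
  moreover have "summable (\<lambda>n. r ^ Suc n * sin (real (Suc n) * t) / real (Suc n))"
    by (rule summable_comparison_test[OF _ summable_power_Suc[OF assms]])
      (use abs_abel_sin_term_le[OF assms(1)] in auto)
  ultimately show ?thesis
    by (simp add: suminf_minus abel_sin_def)
qed

lemma one_minus_mult_cos_pos: fixes r x :: real shows "0 \<le> r \<Longrightarrow> r < 1 \<Longrightarrow> 0 < 1 - r * cos x"
  using mult_left_mono[OF cos_le_one, of r x] by simp

lemma has_field_derivative_arctan_sin_ratio:
  fixes r :: real assumes "0 \<le> r" "r < 1"
  shows "((\<lambda>x. arctan (r * sin x / (1 - r * cos x))) has_field_derivative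
           (r * cos t - r\<^sup>2) / (1 - 2 * r * cos t + r\<^sup>2)) (at t)"
proof -
  define c s d where "c = cos t" and "s = sin t" and "d = 1 - r * c"
  have d: "d > 0"
    using one_minus_mult_cos_pos[OF assms] by (simp add: d_def c_def)
  have sc: "s\<^sup>2 + c\<^sup>2 = 1"
    by (simp add: s_def c_def)
  have "d\<^sup>2 + (r * s)\<^sup>2 = 1 - 2 * r * c + r\<^sup>2 * (s\<^sup>2 + c\<^sup>2)"
    by (simp add: d_def algebra_simps power2_eq_square)
  then have D: "d\<^sup>2 + (r * s)\<^sup>2 = 1 - 2 * r * c + r\<^sup>2"
    unfolding sc by simp
  have "((\<lambda>x. r * sin x / (1 - r * cos x)) has_field_derivative
          (r * c * d - r * s * (r * s)) / d\<^sup>2) (at t)"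
    unfolding c_def s_def d_def using d
    by (auto intro!: derivative_eq_intros simp: c_def d_def power2_eq_square)
  from DERIV_chain2[OF DERIV_arctan this]
  have "((\<lambda>x. arctan (r * sin x / (1 - r * cos x))) has_field_derivative
          inverse (1 + (r * s / d)\<^sup>2) * ((r * c * d - r * s * (r * s)) / d\<^sup>2)) (at t)"
    by (simp add: c_def s_def d_def)
  moreover have "1 + (r * s / d)\<^sup>2 = (d\<^sup>2 + (r * s)\<^sup>2) / d\<^sup>2"
    using d by (simp add: field_simps)
  moreover have "d\<^sup>2 + (r * s)\<^sup>2 > 0"
    using d by (simp add: add_pos_nonneg)
  moreover have "r * c * d - r * s * (r * s) = r * c - r\<^sup>2 * (s\<^sup>2 + c\<^sup>2)"
    by (simp add: d_def algebra_simps power2_eq_square)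
  ultimately have "((\<lambda>x. arctan (r * sin x / (1 - r * cos x))) has_field_derivative
      (r * c - r\<^sup>2 * (s\<^sup>2 + c\<^sup>2)) / (d\<^sup>2 + (r * s)\<^sup>2)) (at t)"
    using d by simp
  then show ?thesis
    unfolding D sc by (simp add: c_def)
qed

lemma abel_sin_eq_arctan:
  fixes r :: real assumes "0 \<le> r" "r < 1"
  shows "abel_sin r t = arctan (r * sin t / (1 - r * cos t))"
proof -
  have "\<forall>x. ((\<lambda>x. abel_sin r x - arctan (r * sin x / (1 - r * cos x))) has_field_derivative 0) (at x)"
    using DERIV_diff[OF has_field_derivative_abel_sin has_field_derivative_arctan_sin_ratio] assms
    by fastforce
  from DERIV_isconst_all[OF this, of t 0] show ?thesis
    by (simp add: abel_sin_def)
qed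

lemma continuous_on_abel_cos: "continuous_on {0..1} (\<lambda>r. abel_cos r t)"
proof -
  have "uniform_limit {0..1} (\<lambda>n r. \<Sum>i<n. r ^ Suc i * cos (real (Suc i) * t) / real (Suc i) ^ 2)
          (\<lambda>r. abel_cos r t) sequentially"
    unfolding abel_cos_def
  proof (rule Weierstrass_m_test[OF _ summable_inverse_Suc_power[of 2]])
    fix n :: nat and r :: real assume r: "r \<in> {0..1}"
    have "r ^ Suc n \<le> 1"
      using r by (intro power_le_one) auto
    then have "\<bar>r ^ Suc n * cos (real (Suc n) * t)\<bar> \<le> 1 * 1"
      unfolding abs_mult using r by (intro mult_mono) (auto simp: abs_cos_le_one)
    then show "norm (r ^ Suc n * cos (real (Suc n) * t) / real (Suc n) ^ 2) \<le> 1 / real (Suc n) ^ 2"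
      by (simp add: abs_divide divide_right_mono del: of_nat_Suc)
  qed simp
  moreover have "\<forall>n. continuous_on {0..1} (\<lambda>r. \<Sum>i<n. r ^ Suc i * cos (real (Suc i) * t) / real (Suc i) ^ 2)"
    by (intro allI continuous_intros) (simp del: of_nat_Suc)
  ultimately show ?thesis
    by (intro uniform_limit_theorem[OF always_eventually _ trivial_limit_sequentially])
qed

lemma tendsto_abel_cos_1:
  assumes "r \<longlonglongrightarrow> 1" "\<And>k. r k \<in> {0..1}"
  shows "(\<lambda>k. abel_cos (r k) t) \<longlonglongrightarrow> trig_series True 2 t"
  unfolding abel_cos_1[symmetric]
  by (rule continuous_on_tendsto_compose[OF continuous_on_abel_cos assms(1)]) (use assms(2) in auto)

lemma has_integral_arctan_sin_ratio:
  fixes r \<theta> :: real assumes "0 \<le> r" "r < 1" "0 \<le> \<theta>"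
  shows "((\<lambda>t. - arctan (r * sin t / (1 - r * cos t))) has_integral (abel_cos r \<theta> - abel_cos r 0)) {0..\<theta>}"
proof (rule fundamental_theorem_of_calculus[OF assms(3)])
  fix x assume "x \<in> {0..\<theta>}"
  show "(abel_cos r has_vector_derivative - arctan (r * sin x / (1 - r * cos x))) (at x within {0..\<theta>})"
    using has_field_derivative_abel_cos[OF assms(1,2), of x] abel_sin_eq_arctan[OF assms(1,2), of x]
    by (simp add: has_real_derivative_iff_has_vector_derivative[symmetric] has_field_derivative_at_within)
qed

lemma arctan_sin_div_one_minus_cos:
  fixes t :: real assumes "0 < t" "t < 2 * pi"
  shows "1 - cos t \<noteq> 0" "arctan (sin t / (1 - cos t)) = (pi - t) / 2"
proof -
  define y where "y = t / 2"
  have t: "t = 2 * y"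
    by (simp add: y_def)
  have "sin y > 0"
    using assms by (intro sin_gt_zero) (auto simp: y_def)
  then show "1 - cos t \<noteq> 0"
    unfolding t cos_double_sin by simp
  have "sin t / (1 - cos t) = cos y / sin y"
    unfolding t sin_double cos_double_sin using \<open>sin y > 0\<close> by (simp add: field_simps power2_eq_square)
  also have "\<dots> = tan (pi / 2 - y)"
    using sin_cos_eq[of "pi / 2 - y"] cos_sin_eq[of "pi / 2 - y"] by (simp add: tan_def)
  also have "pi / 2 - y = (pi - t) / 2"
    by (simp add: y_def field_simps)
  finally show "arctan (sin t / (1 - cos t)) = (pi - t) / 2"
    using assms by (simp add: arctan_tan)
qed

lemma tendsto_arctan_sin_ratio:
  assumes "r \<longlonglongrightarrow> 1" "0 < x" "x < 2 * pi"
  shows "(\<lambda>k. arctan (r k * sin x / (1 - r k * cos x))) \<longlonglongrightarrow> (pi - x) / 2"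
proof -
  have "1 - 1 * cos x \<noteq> 0" and limit: "arctan (1 * sin x / (1 - 1 * cos x)) = (pi - x) / 2"
    using arctan_sin_div_one_minus_cos[OF assms(2,3)] by simp_all
  have "(\<lambda>k. arctan (r k * sin x / (1 - r k * cos x))) \<longlonglongrightarrow> arctan (1 * sin x / (1 - 1 * cos x))"
    by (intro tendsto_intros assms(1) \<open>1 - 1 * cos x \<noteq> 0\<close>)
  then show ?thesis
    unfolding limit .
qed

lemma cos_series_2_at_0: "trig_series True 2 0 = pi\<^sup>2 / 6"
  using sums_unique[OF inverse_squares_sums]
  by (simp add: trig_series_def cos_or_sin_def add.commute)

text \<open>Abel summation: let \<open>r \<rightarrow> 1\<close> in the integrated identity for \<open>abel_cos r\<close>; the integrands
  are bounded by \<open>\<pi>/2\<close> and tend to the sawtooth \<open>(t - \<pi>)/2\<close> off the endpoints.\<close>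
lemma cos_series_2_diff:
  assumes "0 \<le> \<theta>" "\<theta> \<le> 2 * pi"
  shows "trig_series True 2 \<theta> - trig_series True 2 0 = integral {0..\<theta>} (\<lambda>t. (t - pi) / 2)"
proof -
  define r where "r k = 1 - inverse (real (Suc k))" for k
  have r: "0 \<le> r k" "r k < 1" for k
    by (simp_all add: r_def field_simps)
  have "r \<longlonglongrightarrow> 1"
    unfolding r_def using LIMSEQ_inverse_real_of_nat_add_minus[of 1] by simp
  define F where "F k t = - arctan (r k * sin t / (1 - r k * cos t))" for k t
  define g where "g t = (if t = 0 \<or> t = 2 * pi then 0 else (t - pi) / 2)" for t
  have F_integral: "(F k has_integral (abel_cos (r k) \<theta> - abel_cos (r k) 0)) {0..\<theta>}" for k
    unfolding F_def using r assms by (intro has_integral_arctan_sin_ratio)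
  have "(\<lambda>k. integral {0..\<theta>} (F k)) \<longlonglongrightarrow> integral {0..\<theta>} g"
  proof (rule dominated_convergence(2)[where h = "\<lambda>_. pi / 2"])
    show "F k integrable_on {0..\<theta>}" for k
      using F_integral by blast
    show "(\<lambda>_. pi / 2) integrable_on {0..\<theta>}"
      by (intro integrable_continuous_real continuous_intros)
    show "norm (F k x) \<le> pi / 2" for k x
      using arctan_bounded[of "r k * sin x / (1 - r k * cos x)"] by (auto simp: F_def abs_le_iff)
    fix x assume x: "x \<in> {0..\<theta>}"
    show "(\<lambda>k. F k x) \<longlonglongrightarrow> g x"
    proof (cases "x = 0 \<or> x = 2 * pi")
      case True
      then have "sin x = 0"
        by auto
      with True show ?thesis
        by (simp add: F_def g_def)
    next
      case False
      then have "0 < x" "x < 2 * pi"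
        using x assms by auto
      from tendsto_minus[OF tendsto_arctan_sin_ratio[OF \<open>r \<longlonglongrightarrow> 1\<close> this]] False show ?thesis
        by (simp add: F_def g_def minus_divide_left)
    qed
  qed
  moreover have "(\<lambda>k. integral {0..\<theta>} (F k)) \<longlonglongrightarrow> trig_series True 2 \<theta> - trig_series True 2 0"
    using tendsto_diff[OF tendsto_abel_cos_1 tendsto_abel_cos_1, OF \<open>r \<longlonglongrightarrow> 1\<close> _ \<open>r \<longlonglongrightarrow> 1\<close>]
      integral_unique[OF F_integral] r by (simp add: less_imp_le)
  moreover have "integral {0..\<theta>} g = integral {0..\<theta>} (\<lambda>t. (t - pi) / 2)"
    by (rule integral_spike[where S = "{0, 2 * pi}"]) (auto simp: g_def)
  ultimately show ?thesis
    using LIMSEQ_unique by metis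
qed

lemma cos_series_2:
  assumes "0 \<le> \<theta>" "\<theta> \<le> 2 * pi"
  shows "trig_series True 2 \<theta> = pi\<^sup>2 / 6 - pi * \<theta> / 2 + \<theta>\<^sup>2 / 4"
proof -
  have "((\<lambda>t. (t - pi) / 2) has_integral (\<theta>\<^sup>2 / 4 - pi * \<theta> / 2) - (0\<^sup>2 / 4 - pi * 0 / 2)) {0..\<theta>}"
    by (rule fundamental_theorem_of_calculus[OF assms(1)])
      (auto intro!: derivative_eq_intros simp: has_real_derivative_iff_has_vector_derivative[symmetric] field_simps)
  from integral_unique[OF this]
  have "integral {0..\<theta>} (\<lambda>t. (t - pi) / 2) = \<theta>\<^sup>2 / 4 - pi * \<theta> / 2"
    by simp
  then show ?thesis
    using cos_series_2_diff[OF assms] cos_series_2_at_0 by simp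
qed

section \<open>Polynomial closed forms on one period\<close>

lemma cos_series_2_eq_poly:
  assumes "\<theta> \<in> {0..2 * pi}"
  shows "trig_series True 2 \<theta> = pi ^ 2 * poly [:1/6, -1/2, 1/4:] (\<theta> / pi)"
proof -
  have "trig_series True 2 \<theta> = pi\<^sup>2 / 6 - pi * \<theta> / 2 + \<theta>\<^sup>2 / 4"
    using cos_series_2 assms by simp
  also have "\<dots> = pi ^ 2 * poly [:1/6, -1/2, 1/4:] (\<theta> / pi)"
    by (simp add: field_simps power2_eq_square)
  finally show ?thesis .
qed

lemma eq_poly_antideriv_if_has_derivative:
  fixes F f :: "real \<Rightarrow> real"
  assumes F: "\<And>x. (F has_field_derivative f x) (at x)"
    and f: "\<And>x. x \<in> {0..b} \<Longrightarrow> f x = c ^ n * poly p (x / c)"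
    and "c \<noteq> 0" and "\<theta> \<in> {0..b}"
  shows "F \<theta> = F 0 + c ^ Suc n * poly (poly_antideriv p) (\<theta> / c)"
proof -
  define G where "G x = F x - c ^ Suc n * poly (poly_antideriv p) (x / c)" for x
  have G: "(G has_field_derivative f x - c ^ n * poly p (x / c)) (at x)" for x
    unfolding G_def using \<open>c \<noteq> 0\<close> by (intro DERIV_diff F has_field_derivative_poly_antideriv_rescaled)
  have "G \<theta> = G 0"
  proof (cases "\<theta> = 0")
    case False
    have "0 < \<theta>"
      using False \<open>\<theta> \<in> {0..b}\<close> by simp
    moreover have "continuous_on {0..\<theta>} G"
      using G by (intro continuous_at_imp_continuous_on ballI DERIV_isCont)
    moreover have "(G has_field_derivative 0) (at x)" if "0 < x" "x < \<theta>" for x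
      using G[of x] f[of x] that \<open>\<theta> \<in> {0..b}\<close> by simp
    ultimately show ?thesis
      by (rule DERIV_isconst_end)
  qed simp
  then show ?thesis
    by (simp add: G_def)
qed

lemma sin_series_eq_poly_step:
  assumes "2 \<le> s" and p: "\<And>\<theta>. \<theta> \<in> {0..2 * pi} \<Longrightarrow> trig_series True s \<theta> = pi ^ s * poly p (\<theta> / pi)"
    and "\<theta> \<in> {0..2 * pi}"
  shows "trig_series False (Suc s) \<theta> = pi ^ Suc s * poly (poly_antideriv p) (\<theta> / pi)"
proof -
  have "trig_series False (Suc s) \<theta> = trig_series False (Suc s) 0 + pi ^ Suc s * poly (poly_antideriv p) (\<theta> / pi)"
    by (rule eq_poly_antideriv_if_has_derivative[OF _ p _ \<open>\<theta> \<in> {0..2 * pi}\<close>])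
      (use has_field_derivative_trig_series[OF \<open>2 \<le> s\<close>, of False] in simp_all)
  then show ?thesis
    by (simp add: sin_series_at_0)
qed

lemma cos_series_eq_poly_step:
  assumes "2 \<le> s" and p: "\<And>\<theta>. \<theta> \<in> {0..2 * pi} \<Longrightarrow> trig_series False s \<theta> = pi ^ s * poly p (\<theta> / pi)"
    and "\<theta> \<in> {0..2 * pi}"
  defines "q \<equiv> poly_antideriv p" and "c \<equiv> 2 - 2 / 2 ^ Suc s"
  shows "trig_series True (Suc s) \<theta> = pi ^ Suc s * poly ([:poly q 1 / c:] - q) (\<theta> / pi)"
proof -
  define Z where "Z = trig_series True (Suc s) 0"
  have T: "trig_series True (Suc s) x = Z - pi ^ Suc s * poly q (x / pi)" if "x \<in> {0..2 * pi}" for x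
  proof -
    have "- trig_series True (Suc s) x = - Z + pi ^ Suc s * poly q (x / pi)"
      unfolding Z_def q_def
      by (rule eq_poly_antideriv_if_has_derivative[OF _ p _ that])
        (use DERIV_minus[OF has_field_derivative_trig_series[OF \<open>2 \<le> s\<close>, of True]] in simp_all)
    then show ?thesis
      by linarith
  qed
  have "(2::real) / 2 ^ Suc s \<le> 1"
    by simp
  then have "c > 0"
    unfolding c_def by linarith
  have "trig_series True (Suc s) pi + Z = 2 * Z / 2 ^ Suc s"
    unfolding Z_def using \<open>2 \<le> s\<close> by (intro cos_series_at_pi) simp
  moreover have "c * Z = 2 * Z - 2 * Z / 2 ^ Suc s"
    by (simp add: c_def left_diff_distrib)
  moreover have "trig_series True (Suc s) pi = Z - pi ^ Suc s * poly q 1"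
    using T[of pi] by simp
  ultimately have "c * Z = pi ^ Suc s * poly q 1"
    by linarith
  then have "Z = pi ^ Suc s * (poly q 1 / c)"
    using \<open>c > 0\<close> by (simp add: field_simps)
  then have "pi ^ Suc s * poly ([:poly q 1 / c:] - q) (\<theta> / pi) = Z - pi ^ Suc s * poly q (\<theta> / pi)"
    by (simp add: right_diff_distrib)
  with T[OF \<open>\<theta> \<in> {0..2 * pi}\<close>] show ?thesis
    by linarith
qed

lemma trig_series_eq_rational_poly:
  assumes "2 \<le> s"
  shows "\<exists>p. rational_poly p \<and>
           (\<forall>\<theta>\<in>{0..2 * pi}. trig_series (even s) s \<theta> = pi ^ s * poly p (\<theta> / pi))"
  using assms
proof (induction s rule: nat_induct_at_least)
  case base
  have "trig_series (even (2::nat)) 2 \<theta> = pi ^ 2 * poly [:1/6, -1/2, 1/4:] (\<theta> / pi)"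
    if "\<theta> \<in> {0..2 * pi}" for \<theta>
    using cos_series_2_eq_poly that by simp
  moreover have "rational_poly [:1/6, -1/2, 1/4:]"
    by (intro rational_poly_pCons rational_poly_0) simp_all
  ultimately show ?case
    by blast
next
  case (Suc s)
  then obtain p where "rational_poly p"
    and p: "\<forall>\<theta>\<in>{0..2 * pi}. trig_series (even s) s \<theta> = pi ^ s * poly p (\<theta> / pi)"
    by (elim exE conjE)
  show ?case
  proof (cases "even s")
    case True
    then have "trig_series (even (Suc s)) (Suc s) \<theta> = pi ^ Suc s * poly (poly_antideriv p) (\<theta> / pi)"
      if "\<theta> \<in> {0..2 * pi}" for \<theta>
      using sin_series_eq_poly_step[OF Suc.hyps _ that] p by simp
    with \<open>rational_poly p\<close> show ?thesis
      by blast
  next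
    case False
    define q where "q = [:poly (poly_antideriv p) 1 / (2 - 2 / 2 ^ Suc s):] - poly_antideriv p"
    have "trig_series (even (Suc s)) (Suc s) \<theta> = pi ^ Suc s * poly q (\<theta> / pi)"
      if "\<theta> \<in> {0..2 * pi}" for \<theta>
      using cos_series_eq_poly_step[OF Suc.hyps _ that] p False by (simp add: q_def)
    moreover have "rational_poly q"
      unfolding q_def using \<open>rational_poly p\<close>
      by (intro rational_poly_diff rational_poly_pCons rational_poly_0 rational_poly_antideriv
          Rats_divide rational_poly_poly_in_Rats) simp_all
    ultimately show ?thesis
      by blast
  qed
qed

lemma rational_poly_on_cells_trig_series:
  assumes "2 \<le> s"
  shows "rational_poly_on_cells (\<lambda>u. trig_series (even s) s (pi * u) / pi ^ s) 2"
  unfolding rational_poly_on_cells_def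
proof
  fix j :: int
  obtain p where "rational_poly p"
    and p: "\<forall>\<theta>\<in>{0..2 * pi}. trig_series (even s) s \<theta> = pi ^ s * poly p (\<theta> / pi)"
    using trig_series_eq_rational_poly[OF assms] by blast
  have "trig_series (even s) s (pi * u) / pi ^ s = poly (pcompose p [:- 2 * of_int j, 1:]) u"
    if "u \<in> {of_int j * 2 .. (of_int j + 1) * 2}" for u
  proof -
    define \<theta> where "\<theta> = pi * u - 2 * pi * of_int j"
    have "0 \<le> u - 2 * of_int j" "u - 2 * of_int j \<le> 2"
      using that by auto
    then have "0 \<le> pi * (u - 2 * of_int j)" "pi * (u - 2 * of_int j) \<le> pi * 2"
      by (auto intro: mult_left_mono)
    then have "\<theta> \<in> {0..2 * pi}"
      by (simp add: \<theta>_def algebra_simps)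
    have "trig_series (even s) s (pi * u) = trig_series (even s) s (\<theta> + 2 * pi * of_int j)"
      by (simp add: \<theta>_def)
    also have "\<dots> = pi ^ s * poly p (\<theta> / pi)"
      using p \<open>\<theta> \<in> {0..2 * pi}\<close> by (simp add: trig_series_periodic)
    also have "\<theta> / pi = u - 2 * of_int j"
      by (simp add: \<theta>_def field_simps)
    finally show ?thesis
      by (simp add: poly_pcompose)
  qed
  moreover have "rational_poly (pcompose p [:- 2 * of_int j, 1:])"
    using \<open>rational_poly p\<close> by (intro rational_poly_pcompose rational_poly_pCons rational_poly_0) simp_all
  ultimately show "\<exists>q. rational_poly q \<and> (\<forall>u\<in>{of_int j * 2 .. (of_int j + 1) * 2}.
                     trig_series (even s) s (pi * u) / pi ^ s = poly q u)"
    by blast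
qed


section \<open>Products of powers of sine and cosine\<close>

definition trig_comb :: "bool \<Rightarrow> (rat \<times> int) list \<Rightarrow> real \<Rightarrow> real" where
  "trig_comb c L x = (\<Sum>(a, k)\<leftarrow>L. of_rat a * cos_or_sin c (of_int k * x))"

lemma trig_comb_Nil [simp]: "trig_comb c [] x = 0"
  by (simp add: trig_comb_def)

lemma trig_comb_Cons [simp]:
  "trig_comb c ((a, k) # L) x = of_rat a * cos_or_sin c (of_int k * x) + trig_comb c L x"
  by (simp add: trig_comb_def)

lemma trig_comb_append [simp]: "trig_comb c (L @ M) x = trig_comb c L x + trig_comb c M x"
  by (simp add: trig_comb_def)

definition mult_cos :: "(rat \<times> int) list \<Rightarrow> (rat \<times> int) list" where
  "mult_cos L = concat (map (\<lambda>(a, k). [(a / 2, k + 1), (a / 2, k - 1)]) L)"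

definition mult_sin :: "bool \<Rightarrow> (rat \<times> int) list \<Rightarrow> (rat \<times> int) list" where
  "mult_sin c L = concat (map (\<lambda>(a, k).
     if c then [(a / 2, k + 1), (- a / 2, k - 1)] else [(a / 2, k - 1), (- a / 2, k + 1)]) L)"

lemma mult_trig_comb_termwise:
  assumes "\<And>a k. h * (of_rat a * cos_or_sin c (of_int k * x)) = trig_comb c' (g (a, k)) x"
  shows "h * trig_comb c L x = trig_comb c' (concat (map g L)) x"
  by (induction L) (auto simp: distrib_left assms)

lemma of_int_plus_minus_one_mult:
  "of_int (k + 1) * x = of_int k * x + x" "of_int (k - 1) * x = of_int k * x - x"
  by (simp_all add: algebra_simps)

lemma cos_mult_trig_comb: "cos x * trig_comb c L x = trig_comb c (mult_cos L) x"
  unfolding mult_cos_def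
  by (rule mult_trig_comb_termwise, cases c)
    (simp_all add: of_int_plus_minus_one_mult cos_or_sin_def cos_add cos_diff sin_add sin_diff
      of_rat_divide field_simps)

lemma sin_mult_trig_comb: "sin x * trig_comb c L x = trig_comb (\<not> c) (mult_sin c L) x"
  unfolding mult_sin_def
  by (rule mult_trig_comb_termwise, cases c)
    (simp_all add: of_int_plus_minus_one_mult cos_or_sin_def cos_add cos_diff sin_add sin_diff
      of_rat_divide of_rat_minus field_simps)

lemma cos_power_eq_trig_comb: "\<exists>L. \<forall>x. cos x ^ m = trig_comb True L x"
proof (induction m)
  case 0
  have "cos x ^ 0 = trig_comb True [(1, 0)] x" for x
    by (simp add: cos_or_sin_def)
  then show ?case
    by blast
next
  case (Suc m)
  then obtain L where "\<forall>x. cos x ^ m = trig_comb True L x"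
    by blast
  then have "\<forall>x. cos x ^ Suc m = trig_comb True (mult_cos L) x"
    by (simp flip: cos_mult_trig_comb)
  then show ?case
    by blast
qed

lemma cos_power_sin_power_eq_trig_comb:
  "\<exists>L. \<forall>x. cos x ^ m * sin x ^ n = trig_comb (even n) L x"
proof (induction n)
  case 0
  then show ?case
    using cos_power_eq_trig_comb by simp
next
  case (Suc n)
  then obtain L where "\<forall>x. cos x ^ m * sin x ^ n = trig_comb (even n) L x"
    by blast
  then have "\<forall>x. cos x ^ m * sin x ^ Suc n = trig_comb (even (Suc n)) (mult_sin (even n) L) x"
    by (simp flip: sin_mult_trig_comb add: algebra_simps)
  then show ?case
    by blast
qed

lemma sums_trig_comb_series:
  assumes "2 \<le> s"
  shows "(\<lambda>n. trig_comb c L (real (Suc n) * t) / real (Suc n) ^ s) sums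
           (\<Sum>(a, k)\<leftarrow>L. of_rat a * trig_series c s (of_int k * t))"
proof (induction L)
  case (Cons ak L)
  obtain a k where [simp]: "ak = (a, k)"
    by fastforce
  have "(\<lambda>n. cos_or_sin c (real (Suc n) * (of_int k * t)) / real (Suc n) ^ s) sums
          trig_series c s (of_int k * t)"
    unfolding trig_series_def using assms by (intro summable_sums summable_trig_series)
  from sums_add[OF sums_mult[OF this, of "of_rat a"] Cons.IH] show ?case
    by (simp add: add_divide_distrib mult.left_commute)
qed simp

definition trig_comb_series :: "nat \<Rightarrow> (rat \<times> int) list \<Rightarrow> real \<Rightarrow> real" where
  "trig_comb_series s L \<tau> =
     (\<Sum>(a, k)\<leftarrow>L. of_rat a * (trig_series (even s) s (of_int k * (pi * \<tau>)) / pi ^ s))"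

lemma rational_poly_on_grid_trig_series_int_mult:
  assumes "2 \<le> s"
  shows "rational_poly_on_grid (\<lambda>\<tau>. trig_series (even s) s (of_int k * (pi * \<tau>)) / pi ^ s)"
proof -
  let ?h = "\<lambda>u. trig_series (even s) s (pi * u) / pi ^ s"
  have h: "rational_poly_on_cells ?h 2"
    using assms by (rule rational_poly_on_cells_trig_series)
  have k: "trig_series (even s) s (of_int k * (pi * \<tau>)) / pi ^ s = ?h (of_int k * \<tau>)" for \<tau>
    by (simp add: mult.left_commute)
  show ?thesis
  proof (cases "k = 0")
    case True
    obtain p where "rational_poly p" "\<forall>u\<in>{of_int 0 * 2 .. (of_int 0 + 1) * 2}. ?h u = poly p u"
      using h unfolding rational_poly_on_cells_def by blast
    then have "?h 0 = poly p 0"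
      by (auto dest: bspec[of _ _ 0])
    with \<open>rational_poly p\<close> have "?h 0 \<in> \<rat>"
      by (simp add: rational_poly_poly_in_Rats)
    then show ?thesis
      unfolding k True by (simp add: rational_poly_on_grid_const)
  next
    case False
    have "rational_poly_on_cells (\<lambda>\<tau>. ?h (of_int k * \<tau>)) (real 2 / real (nat \<bar>k\<bar>))"
      using rational_poly_on_cells_int_mult[OF h False] by simp
    then show ?thesis
      unfolding k by (rule rational_poly_on_grid_if_cells) (use False in auto)
  qed
qed

lemma rational_poly_on_grid_trig_comb_series:
  assumes "2 \<le> s"
  shows "rational_poly_on_grid (trig_comb_series s L)"
  unfolding trig_comb_series_def[abs_def]
proof (intro rational_poly_on_grid_sum_list)
  fix ak :: "rat \<times> int"
  obtain a k where ak: "ak = (a, k)"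
    by fastforce
  show "rational_poly_on_grid (\<lambda>\<tau>. case ak of (a, k) \<Rightarrow>
               of_rat a * (trig_series (even s) s (of_int k * (pi * \<tau>)) / pi ^ s))"
    unfolding ak prod.case
    by (intro rational_poly_on_grid_cmult rational_poly_on_grid_trig_series_int_mult assms Rats_of_rat)
qed

lemma power_int_inverse_nonpos:
  fixes x :: real assumes "a \<le> 0"
  shows "(1 / x) powi a = x ^ nat (- a)"
  using assms by (cases "a = 0") (simp_all add: power_int_def)

theorem lemma4:
  fixes a b s :: int
  assumes "a \<le> 0" and "b \<le> 0" and "s > 1" and "even (s - b)"
  shows "\<exists>f :: real \<Rightarrow> real. piecewise_rat_poly f \<and>
           (\<forall>\<tau> :: real. psi a b s \<tau> = pi powi s * f \<tau>)"
proof -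
  define m n S where "m = nat (- a)" and "n = nat (- b)" and "S = nat s"
  have s: "s = int S" "2 \<le> S" and "even n = even S"
    using assms by (auto simp: S_def n_def even_nat_iff)
  obtain L where "\<forall>x. cos x ^ m * sin x ^ n = trig_comb (even n) L x"
    using cos_power_sin_power_eq_trig_comb by blast
  then have L: "cos x ^ m * sin x ^ n = trig_comb (even S) L x" for x
    using \<open>even n = even S\<close> by simp
  have "psi a b s \<tau> = pi powi s * trig_comb_series S L \<tau>" for \<tau>
  proof -
    have "psi a b s \<tau> = (\<Sum>j. trig_comb (even S) L (real (Suc j) * (pi * \<tau>)) / real (Suc j) ^ S)"
      unfolding psi_def sec_def csc_def Let_def s(1) power_int_of_nat
        power_int_inverse_nonpos[OF assms(1)] power_int_inverse_nonpos[OF assms(2)]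
        m_def[symmetric] n_def[symmetric] L by (simp add: ac_simps)
    also have "\<dots> = (\<Sum>(a, k)\<leftarrow>L. of_rat a * trig_series (even S) S (of_int k * (pi * \<tau>)))"
      using sums_trig_comb_series[OF \<open>2 \<le> S\<close>] by (rule sums_unique[symmetric])
    also have "\<dots> = pi powi s * trig_comb_series S L \<tau>"
      by (simp add: trig_comb_series_def s(1) case_prod_unfold flip: sum_list_const_mult)
    finally show ?thesis .
  qed
  moreover have "piecewise_rat_poly (trig_comb_series S L)"
    using \<open>2 \<le> S\<close> by (intro rational_poly_on_grid_imp_piecewise rational_poly_on_grid_trig_comb_series)
  ultimately show ?thesis
    by blast
qed

end
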